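(* Let $F_1,\dots,F_n:\mathbb{R}^d\to\mathbb{R}^d$ with each $F_i$ $L_i$-Lipschitz, $F=\frac1n\sum_iF_i$, $L_{max}=\max_iL_i$. If the extrapolation step size of SEG-RR satisfies $\gamma_2\le\frac1{L_{max}}$, then for every epoch $k$, $$\mathbb{E}_k\Big[\sum_{i=0}^{n-1}\|F_{\pi_i^k}(\bar z_i^k)-F_{\pi_i^k}(\hat z_0^k)\|^2\Big]\le6L_{max}^2\,\mathbb{E}_k\Big[\sum_{i=0}^{n-1}\|z_i^k-z_0^k\|^2\Big]+3L_{max}^2\gamma_2^2\,\mathbb{E}_k\Big[\sum_{i=0}^{n-1}\|F_{\pi_i^k}(z_0^k)-F(z_0^k)\|^2\Big],$$ where $\hat z_0^k=z_0^k-\gamma_2F(z_0^k)$.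
   Context: SEG-RR with step sizes $\gamma_1,\gamma_2>0$: for each epoch $k$, with current point $z_0^k$, draw a permutation $\pi^k=(\pi^k_0,\dots,\pi^k_{n-1})$ of $\{1,\dots,n\}$ uniformly at random, independently of the past; for $i=0,\dots,n-1$ set $\bar z_i^k=z_i^k-\gamma_2F_{\pi_i^k}(z_i^k)$, $z_{i+1}^k=z_i^k-\gamma_1F_{\pi_i^k}(\bar z_i^k)$; then $z_0^{k+1}=z_n^k$. $\mathbb{E}_k$ denotes expectation over $\pi^k$ conditional on the history up to $z_0^k$. *)

theory Defs
  imports "HOL-Analysis.Analysis" "HOL-Probability.Probability"
    "HOL-Combinatorics.Multiset_Permutations"
begin

text \<open>The permutation p of {1..n} is represented as a distinct
  list with set {1..n}; p ! i (= pi_i) is the i-th drawn index (i = 0..n-1).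
  seg_z g1 g2 F p z0 i is the iterate z_i of the epoch started at z0.\<close>

fun seg_z :: "real \<Rightarrow> real \<Rightarrow> (nat \<Rightarrow> 'a::real_normed_vector \<Rightarrow> 'a) \<Rightarrow> nat list \<Rightarrow> 'a \<Rightarrow> nat \<Rightarrow> 'a"
  where
  "seg_z g1 g2 F p z0 0 = z0"
| "seg_z g1 g2 F p z0 (Suc i) =
     seg_z g1 g2 F p z0 i
       - g1 *\<^sub>R F (p ! i) (seg_z g1 g2 F p z0 i - g2 *\<^sub>R F (p ! i) (seg_z g1 g2 F p z0 i))"

definition seg_zbar :: "real \<Rightarrow> real \<Rightarrow> (nat \<Rightarrow> 'a::real_normed_vector \<Rightarrow> 'a) \<Rightarrow> nat list \<Rightarrow> 'a \<Rightarrow> nat \<Rightarrow> 'a"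
  where "seg_zbar g1 g2 F p z0 i =
     seg_z g1 g2 F p z0 i - g2 *\<^sub>R F (p ! i) (seg_z g1 g2 F p z0 i)"

text \<open>Expectation over a uniformly random permutation of {1..n} (conditional on z0).\<close>
definition Eperm :: "nat \<Rightarrow> (nat list \<Rightarrow> real) \<Rightarrow> real" where
  "Eperm n X = measure_pmf.expectation (pmf_of_set (permutations_of_set {1..n})) X"

end

theory Submission
  imports Defs
begin

text \<open>The bound holds for every single permutation and every index separately, so taking
  expectations only uses monotonicity and linearity. For one index, with j the drawn index, the
  distance between the two arguments of F_j is at most
  |z_i - z_0| + g2 |F_j z_i - F_j z_0| + g2 |F_j z_0 - F z_0| \<le> 2 |z_i - z_0| + g2 |F_j z_0 - F z_0|,
  because g2 L_j \<le> 1. Applying the Lipschitz bound once more and (2a + b)^2 \<le> 6a^2 + 3b^2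
  gives the claim.\<close>

lemma extragradient_dist_le:
  fixes G :: "'a::real_normed_vector \<Rightarrow> 'a"
  assumes lip: "L-lipschitz_on UNIV G" and g: "0 \<le> g" "g * L \<le> 1"
  shows "norm ((z - g *\<^sub>R G z) - (z0 - g *\<^sub>R v)) \<le> 2 * norm (z - z0) + g * norm (G z0 - v)"
proof -
  have "(z - g *\<^sub>R G z) - (z0 - g *\<^sub>R v) = (z - z0) - g *\<^sub>R (G z - G z0) - g *\<^sub>R (G z0 - v)"
    by (simp add: algebra_simps)
  then have "norm ((z - g *\<^sub>R G z) - (z0 - g *\<^sub>R v))
      \<le> norm (z - z0) + g * norm (G z - G z0) + g * norm (G z0 - v)"
    using g by (smt (verit) norm_scaleR norm_triangle_ineq4 abs_of_nonneg)
  also have "g * norm (G z - G z0) \<le> g * (L * norm (z - z0))"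
    using lipschitz_on_normD[OF lip] g by (simp add: mult_left_mono)
  also have "\<dots> \<le> norm (z - z0)"
    using g by (metis mult.assoc mult_right_mono mult_1 norm_ge_zero)
  finally show ?thesis by simp
qed

lemma extragradient_lipschitz_sq_le:
  fixes G :: "'a::real_normed_vector \<Rightarrow> 'a"
  assumes lip: "L-lipschitz_on UNIV G" and LM: "L \<le> M" and g: "0 \<le> g" "g * M \<le> 1"
  shows "(norm (G (z - g *\<^sub>R G z) - G (z0 - g *\<^sub>R v)))\<^sup>2
    \<le> 6 * M\<^sup>2 * (norm (z - z0))\<^sup>2 + 3 * M\<^sup>2 * g\<^sup>2 * (norm (G z0 - v))\<^sup>2"
proof -
  define a where "a = norm (z - z0)"
  define b where "b = g * norm (G z0 - v)"
  have L0: "0 \<le> L" using lipschitz_on_nonneg[OF lip] .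
  have "g * L \<le> 1" using g LM by (smt (verit) mult_left_mono)
  then have dist: "norm ((z - g *\<^sub>R G z) - (z0 - g *\<^sub>R v)) \<le> 2 * a + b"
    unfolding a_def b_def using extragradient_dist_le[OF lip g(1)] by blast
  have "norm (G (z - g *\<^sub>R G z) - G (z0 - g *\<^sub>R v)) \<le> L * norm ((z - g *\<^sub>R G z) - (z0 - g *\<^sub>R v))"
    using lipschitz_on_normD[OF lip] by simp
  also have "\<dots> \<le> M * (2 * a + b)"
    using dist L0 LM by (meson mult_mono order_trans norm_ge_zero)
  finally have "(norm (G (z - g *\<^sub>R G z) - G (z0 - g *\<^sub>R v)))\<^sup>2 \<le> M\<^sup>2 * (2 * a + b)\<^sup>2"
    by (metis norm_ge_zero power_mono power_mult_distrib)
  also have "(2 * a + b)\<^sup>2 \<le> 6 * a\<^sup>2 + 3 * b\<^sup>2"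
    using zero_le_power2[of "a - b"] by (simp add: power2_eq_square algebra_simps)
  then have "M\<^sup>2 * (2 * a + b)\<^sup>2 \<le> M\<^sup>2 * (6 * a\<^sup>2 + 3 * b\<^sup>2)"
    by (simp add: mult_left_mono)
  finally show ?thesis
    unfolding a_def b_def by (simp add: algebra_simps power_mult_distrib)
qed

lemma nth_in_permutations_of_set:
  assumes "p \<in> permutations_of_set A" "finite A" "i < card A"
  shows "p ! i \<in> A"
  using assms length_finite_permutations_of_set permutations_of_setD(1) nth_mem by metis

lemma seg_zbar_sum_sq_le:
  fixes F :: "nat \<Rightarrow> 'a::real_normed_vector \<Rightarrow> 'a"
  assumes p: "p \<in> permutations_of_set {1..n}"
    and lip: "\<And>j. j \<in> {1..n} \<Longrightarrow> (L j)-lipschitz_on UNIV (F j)"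
    and LM: "\<And>j. j \<in> {1..n} \<Longrightarrow> L j \<le> M"
    and g2: "0 \<le> g2" "g2 * M \<le> 1"
  shows "(\<Sum>i<n. (norm (F (p ! i) (seg_zbar g1 g2 F p z0 i) - F (p ! i) (z0 - g2 *\<^sub>R v)))\<^sup>2)
    \<le> 6 * M\<^sup>2 * (\<Sum>i<n. (norm (seg_z g1 g2 F p z0 i - z0))\<^sup>2)
      + 3 * M\<^sup>2 * g2\<^sup>2 * (\<Sum>i<n. (norm (F (p ! i) z0 - v))\<^sup>2)"
proof -
  have "(\<Sum>i<n. (norm (F (p ! i) (seg_zbar g1 g2 F p z0 i) - F (p ! i) (z0 - g2 *\<^sub>R v)))\<^sup>2)
    \<le> (\<Sum>i<n. 6 * M\<^sup>2 * (norm (seg_z g1 g2 F p z0 i - z0))\<^sup>2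
                + 3 * M\<^sup>2 * g2\<^sup>2 * (norm (F (p ! i) z0 - v))\<^sup>2)"
  proof (rule sum_mono)
    fix i assume "i \<in> {..<n}"
    then have j: "p ! i \<in> {1..n}"
      using nth_in_permutations_of_set[OF p] by simp
    show "(norm (F (p ! i) (seg_zbar g1 g2 F p z0 i) - F (p ! i) (z0 - g2 *\<^sub>R v)))\<^sup>2
      \<le> 6 * M\<^sup>2 * (norm (seg_z g1 g2 F p z0 i - z0))\<^sup>2
        + 3 * M\<^sup>2 * g2\<^sup>2 * (norm (F (p ! i) z0 - v))\<^sup>2"
      unfolding seg_zbar_def using extragradient_lipschitz_sq_le[OF lip[OF j] LM[OF j] g2] .
  qed
  also have "\<dots> = 6 * M\<^sup>2 * (\<Sum>i<n. (norm (seg_z g1 g2 F p z0 i - z0))\<^sup>2)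
      + 3 * M\<^sup>2 * g2\<^sup>2 * (\<Sum>i<n. (norm (F (p ! i) z0 - v))\<^sup>2)"
    by (simp add: sum.distrib sum_distrib_left)
  finally show ?thesis .
qed

lemma Eperm_eq_average: "Eperm n X = (\<Sum>p\<in>permutations_of_set {1..n}. X p) / fact n"
  unfolding Eperm_def by (simp add: integral_pmf_of_set)

lemma Eperm_mono:
  assumes "\<And>p. p \<in> permutations_of_set {1..n} \<Longrightarrow> X p \<le> Y p"
  shows "Eperm n X \<le> Eperm n Y"
  unfolding Eperm_eq_average using assms by (simp add: sum_mono divide_right_mono)

lemma Eperm_linear: "Eperm n (\<lambda>p. a * X p + b * Y p) = a * Eperm n X + b * Eperm n Y"
  unfolding Eperm_eq_average by (simp add: sum.distrib sum_distrib_left add_divide_distrib)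

theorem lemma3:
  fixes F :: "nat \<Rightarrow> real ^ 'd \<Rightarrow> real ^ 'd"
    and L :: "nat \<Rightarrow> real"
    and n :: nat and g1 g2 :: real and z0 :: "real ^ 'd"
  assumes n_pos: "n \<ge> 1"
    and lip: "\<And>i. i \<in> {1..n} \<Longrightarrow> (L i)-lipschitz_on UNIV (F i)"
    and g1_pos: "g1 > 0" and g2_pos: "g2 > 0"
    and g2_le: "g2 * Max (L ` {1..n}) \<le> 1"
  shows
   "(let Fbar = (\<lambda>z. (1 / real n) *\<^sub>R (\<Sum>i\<in>{1..n}. F i z));
         Lmax = Max (L ` {1..n});
         zhat = z0 - g2 *\<^sub>R Fbar z0
     in Eperm n (\<lambda>p. \<Sum>i<n. (norm (F (p ! i) (seg_zbar g1 g2 F p z0 i) - F (p ! i) zhat))\<^sup>2)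
        \<le> 6 * Lmax\<^sup>2 * Eperm n (\<lambda>p. \<Sum>i<n. (norm (seg_z g1 g2 F p z0 i - z0))\<^sup>2)
          + 3 * Lmax\<^sup>2 * g2\<^sup>2 * Eperm n (\<lambda>p. \<Sum>i<n. (norm (F (p ! i) z0 - Fbar z0))\<^sup>2))"
proof -
  define v where "v = (1 / real n) *\<^sub>R (\<Sum>i\<in>{1..n}. F i z0)"
  define M where "M = Max (L ` {1..n})"
  have LM: "L j \<le> M" if "j \<in> {1..n}" for j
    unfolding M_def using that by simp
  have "Eperm n (\<lambda>p. \<Sum>i<n. (norm (F (p ! i) (seg_zbar g1 g2 F p z0 i) - F (p ! i) (z0 - g2 *\<^sub>R v)))\<^sup>2)
    \<le> Eperm n (\<lambda>p. 6 * M\<^sup>2 * (\<Sum>i<n. (norm (seg_z g1 g2 F p z0 i - z0))\<^sup>2)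
                    + 3 * M\<^sup>2 * g2\<^sup>2 * (\<Sum>i<n. (norm (F (p ! i) z0 - v))\<^sup>2))"
    by (rule Eperm_mono,
        rule seg_zbar_sum_sq_le[OF _ lip LM less_imp_le[OF g2_pos] g2_le[folded M_def]])
  then show ?thesis
    unfolding Let_def Eperm_linear v_def[symmetric] M_def[symmetric] .
qed

end
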